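(* Assume that $\mathbb{E}[\bar{w}_k] = 0$ and $\mathbb{E}[\| \bar{w}_k \|^4] \leq \bar{\sigma}_4$ for all $k\in \mathbb{N}$. Suppose that the feedback gain $K$ and observer gain $L$ are chosen such that $\|\bar{A}_{KL}\| = \bar{\rho}_K <1$. Then the variance of the random variable \begin{align*} G^{KL}(\bar{x}) &= \bar{x}^{\rm{T}} \bar{P} \bar{x} + 2 \sum_{k = 0 }^{\infty} \gamma^{k+1} \bar{w}_k^{\rm{T}} \bar{P} \bar{A}_{KL}^{k+1}\bar{x} + \sum_{k = 0 }^{\infty} \gamma^{k+1} \bar{w}_k^{\rm{T}} \bar{P} \bar{w}_k \\ &\quad + 2 \sum_{k = 1 }^{\infty} \gamma^{k+1} \bar{w}_k^{\rm{T}} \bar{P} \sum_{\tau=0}^{k-1} \bar{A}_{KL}^{k-\tau}\bar{w}_{\tau} \end{align*} is bounded.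
   Context: Partially observable system $x_{t+1}=A x_t + B u_t + v_t$, $y_t = C x_t + s_t$ with estimator $\hat{x}_{t+1} = A \hat{x}_t + B u_t + L(y_t - C \hat{x}_t)$ and controller $u_t = K\hat{x}_t$. With $\tilde{x}_t = x_t-\hat{x}_t$ and $\bar{x}_t = [x_t^{\rm{T}}, \tilde{x}_t^{\rm{T}}]^{\rm{T}}$, the augmented dynamics are $\bar{x}_{t+1} = \bar{A}_{KL}\bar{x}_t + \bar{v}_t$, $\bar{A}_{KL} = \begin{bmatrix} A+BK & -BK \\ 0 & A-LC\end{bmatrix}$, $\bar{v}_t = \begin{bmatrix} I & 0 \\ I & -L\end{bmatrix}\begin{bmatrix} v_t \\ s_t\end{bmatrix}$, i.i.d. with distribution $\bar{\mathcal{D}}$. $Q,R>0$, $\gamma\in(0,1)$, $\bar{Q}_K=\begin{bmatrix} Q + K^{\rm{T}} R K & -K^{\rm{T}} R K \\ -K^{\rm{T}} R K & K^{\rm{T}} R K \end{bmatrix}$, and $\bar{P}$ solves $\bar{P} = \bar{Q}_K + \gamma \bar{A}_{KL}^{\rm{T}} \bar{P} \bar{A}_{KL}$. The $\bar{w}_k\sim\bar{\mathcal{D}}$ are mutually independent; $\bar{x}$ is the augmented initial state. This random variable is the fixed point of the distributional Bellman equation for the return $\sum_t \gamma^t \bar{x}_t^{\rm{T}}\bar{Q}_K\bar{x}_t$. $\|\cdot\|$ is the spectral norm. *)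

theory Defs
  imports "HOL-Analysis.Analysis" "HOL-Probability.Probability"
begin

primrec matpow :: "real^'n^'n \<Rightarrow> nat \<Rightarrow> real^'n^'n" where
  "matpow A 0 = mat 1"
| "matpow A (Suc k) = A ** matpow A k"

definition pos_def_mat :: "real^'n^'n \<Rightarrow> bool" where
  "pos_def_mat Q \<longleftrightarrow> transpose Q = Q \<and> (\<forall>x. x \<noteq> 0 \<longrightarrow> x \<bullet> (Q *v x) > 0)"

definition spec_norm :: "real^'n^'m \<Rightarrow> real" where
  "spec_norm M = onorm (\<lambda>x. M *v x)"

definition block2 :: "real^'n^'n \<Rightarrow> real^'n^'n \<Rightarrow> real^'n^'n \<Rightarrow> real^'n^'n \<Rightarrow> real^('n+'n)^('n+'n)" where
  "block2 M11 M12 M21 M22 = (\<chi> i j. case i of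
      Inl a \<Rightarrow> (case j of Inl b \<Rightarrow> M11 $ a $ b | Inr b \<Rightarrow> M12 $ a $ b)
    | Inr a \<Rightarrow> (case j of Inl b \<Rightarrow> M21 $ a $ b | Inr b \<Rightarrow> M22 $ a $ b))"

definition A_KL :: "real^'n^'n \<Rightarrow> real^'m^'n \<Rightarrow> real^'n^'p \<Rightarrow> real^'n^'m \<Rightarrow> real^'p^'n
    \<Rightarrow> real^('n+'n)^('n+'n)" where
  "A_KL A B C K L = block2 (A + B ** K) (- (B ** K)) 0 (A - L ** C)"

definition Q_K :: "real^'n^'n \<Rightarrow> real^'m^'m \<Rightarrow> real^'n^'m \<Rightarrow> real^('n+'n)^('n+'n)" where
  "Q_K Q R K = block2 (Q + transpose K ** R ** K) (- (transpose K ** R ** K))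
                      (- (transpose K ** R ** K)) (transpose K ** R ** K)"

text \<open>Augmented noise [[I,0],[I,-L]] (v,s) = (v, v - L s).\<close>
definition vbar :: "real^'p^'n \<Rightarrow> real^'n \<Rightarrow> real^'p \<Rightarrow> real^('n+'n)" where
  "vbar L v s = (\<chi> i. case i of Inl a \<Rightarrow> v $ a | Inr a \<Rightarrow> (v - L *v s) $ a)"

definition G_KL :: "real \<Rightarrow> real^('n::finite+'n)^('n+'n) \<Rightarrow> real^('n+'n)^('n+'n) \<Rightarrow> real^('n+'n)
    \<Rightarrow> (nat \<Rightarrow> real^('n+'n)) \<Rightarrow> real" where
  "G_KL \<gamma> Abar Pbar xbar w =
     xbar \<bullet> (Pbar *v xbar)
     + 2 * (\<Sum>k. \<gamma>^(k+1) * (w k \<bullet> (Pbar *v (matpow Abar (k+1) *v xbar))))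
     + (\<Sum>k. \<gamma>^(k+1) * (w k \<bullet> (Pbar *v w k)))
     + 2 * (\<Sum>k. \<gamma>^(k+1) * (w k \<bullet> (Pbar *v (\<Sum>\<tau><k. matpow Abar (k - \<tau>) *v w \<tau>))))"

end

theory Submission
  imports Defs "HOL-Real_Asymp.Real_Asymp"
begin

text \<open>
  Since \<open>\<parallel>A_KL\<parallel> \<le> 1\<close>, all powers of \<open>A_KL\<close> are contractions, so the \<open>k\<close>-th summand of
  each series in \<open>G_KL\<close> is bounded by \<open>\<parallel>P\<parallel> \<gamma>\<^sup>k s\<^sub>k\<^sup>2\<close>, where
  \<open>s\<^sub>k = \<parallel>x\<parallel> + \<parallel>w\<^sub>0\<parallel> + \<dots> + \<parallel>w\<^sub>k\<parallel>\<close>. By the power-mean inequality and the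
  fourth-moment bound, \<open>E s\<^sub>k\<^sup>4\<close> grows only like \<open>k\<^sup>4\<close>, and the weighted Cauchy-Schwarz
  inequality \<open>(\<Sum> \<gamma>\<^sup>k a\<^sub>k)\<^sup>2 \<le> (\<Sum> \<gamma>\<^sup>k a\<^sub>k\<^sup>2) / (1 - \<gamma>)\<close> then puts \<open>\<Sum> \<gamma>\<^sup>k s\<^sub>k\<^sup>2\<close> into
  \<open>L\<^sup>2\<close>. Hence \<open>G_KL\<close> is square integrable, so its variance is finite.
\<close>

lemma summable_geometric_times_power:
  fixes \<gamma> c :: real
  assumes "0 < \<gamma>" "\<gamma> < 1"
  shows "summable (\<lambda>k. \<gamma>^k * (real k + c)^p)"
proof (rule summable_comparison_test_bigo)
  define r where "r = ln \<gamma>"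
  have "r < 0"
    using assms by (simp add: r_def)
  have "\<gamma>^k = exp (real k * r)" for k
    using assms by (simp add: r_def exp_of_nat_mult)
  moreover have "(\<lambda>k. exp (real k * r) * (real k + c)^p) \<in> O(\<lambda>k. exp (real k * r / 2))"
    using \<open>r < 0\<close> by real_asymp
  ultimately show "(\<lambda>k. \<gamma>^k * (real k + c)^p) \<in> O(\<lambda>k. exp (real k * r / 2))"
    by simp
  have "(\<lambda>k. exp (real k * r / 2)) = (\<lambda>k. exp (r / 2) ^ k)"
    by (simp add: exp_of_nat_mult[symmetric] ac_simps)
  then show "summable (\<lambda>k. norm (exp (real k * r / 2)))"
    using \<open>r < 0\<close> by simp
qed

lemma Cauchy_Schwarz_ineq_suminf_geometric:
  fixes a :: "nat \<Rightarrow> real"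
  assumes "0 < \<gamma>" "\<gamma> < 1" and nonneg: "\<And>k. 0 \<le> a k"
    and summable: "summable (\<lambda>k. \<gamma>^k * (a k)^2)"
  shows "summable (\<lambda>k. \<gamma>^k * a k)"
    and "(\<Sum>k. \<gamma>^k * a k)^2 \<le> (\<Sum>k. \<gamma>^k * (a k)^2) / (1 - \<gamma>)"
proof -
  have amgm: "\<gamma>^k * a k \<le> (\<gamma>^k + \<gamma>^k * (a k)^2) / 2" for k
  proof -
    have "0 \<le> (a k - 1)^2"
      by simp
    then have "2 * a k \<le> 1 + (a k)^2"
      by (simp add: power2_diff)
    then have "\<gamma>^k * (2 * a k) \<le> \<gamma>^k * (1 + (a k)^2)"
      using assms(1) by (intro mult_left_mono) auto
    then show ?thesis
      by (simp add: algebra_simps)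
  qed
  have "summable (\<lambda>k. (\<gamma>^k + \<gamma>^k * (a k)^2) / 2)"
    using assms(1,2) summable by (intro summable_divide summable_add) auto
  then show summable_a: "summable (\<lambda>k. \<gamma>^k * a k)"
    by (rule summable_comparison_test') (use amgm nonneg assms(1) in simp)
  have partial: "(\<Sum>k<n. \<gamma>^k * a k)^2 \<le> (\<Sum>k. \<gamma>^k * (a k)^2) / (1 - \<gamma>)" for n
  proof -
    have "(\<Sum>k<n. sqrt (\<gamma>^k) * (sqrt (\<gamma>^k) * a k))^2
        \<le> (\<Sum>k<n. (sqrt (\<gamma>^k))^2) * (\<Sum>k<n. (sqrt (\<gamma>^k) * a k)^2)"
      by (rule Cauchy_Schwarz_ineq_sum)
    then have "(\<Sum>k<n. \<gamma>^k * a k)^2 \<le> (\<Sum>k<n. \<gamma>^k) * (\<Sum>k<n. \<gamma>^k * (a k)^2)"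
      using assms(1) by (simp add: power_mult_distrib mult.assoc[symmetric])
    also have "\<dots> \<le> (1 / (1 - \<gamma>)) * (\<Sum>k. \<gamma>^k * (a k)^2)"
    proof (rule mult_mono)
      show "(\<Sum>k<n. \<gamma>^k) \<le> 1 / (1 - \<gamma>)"
        using assms(1,2) sum_le_suminf[of "\<lambda>k. \<gamma>^k" "{..<n}"] by (simp add: suminf_geometric)
      show "(\<Sum>k<n. \<gamma>^k * (a k)^2) \<le> (\<Sum>k. \<gamma>^k * (a k)^2)"
        using assms(1) summable by (intro sum_le_suminf) auto
    qed (use assms(1,2) in \<open>auto intro: sum_nonneg\<close>)
    finally show ?thesis by simp
  qed
  have "(\<lambda>n. (\<Sum>k<n. \<gamma>^k * a k)^2) \<longlonglongrightarrow> (\<Sum>k. \<gamma>^k * a k)^2"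
    using summable_a by (intro tendsto_power summable_LIMSEQ)
  then show "(\<Sum>k. \<gamma>^k * a k)^2 \<le> (\<Sum>k. \<gamma>^k * (a k)^2) / (1 - \<gamma>)"
    by (rule LIMSEQ_le_const2) (use partial in blast)
qed

lemma summable_abs_suminf_le:
  fixes T a :: "nat \<Rightarrow> real"
  assumes "summable a" and bound: "\<And>k. \<bar>T k\<bar> \<le> c * a k"
  shows "summable T" and "\<bar>\<Sum>k. T k\<bar> \<le> c * (\<Sum>k. a k)"
proof -
  have major: "summable (\<lambda>k. c * a k)"
    using assms(1) by (rule summable_mult)
  show "summable T"
    by (rule summable_comparison_test'[OF major]) (simp add: bound)
  have "norm (\<Sum>k. T k) \<le> (\<Sum>k. c * a k)"
    by (rule norm_suminf_le[OF _ major]) (simp add: bound)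
  then show "\<bar>\<Sum>k. T k\<bar> \<le> c * (\<Sum>k. a k)"
    using suminf_mult[OF assms(1)] by simp
qed

lemma power4_sum_le:
  fixes a :: "'i \<Rightarrow> real"
  shows "(\<Sum>i\<in>I. a i)^4 \<le> real (card I)^3 * (\<Sum>i\<in>I. (a i)^4)"
proof -
  have "(\<Sum>i\<in>I. a i)^4 = ((\<Sum>i\<in>I. a i)^2)^2"
    by simp
  also have "\<dots> \<le> (real (card I) * (\<Sum>i\<in>I. (a i)^2))^2"
    using sum_squared_le_sum_of_squares[of a I] by (intro power_mono) (simp_all add: ac_simps)
  also have "\<dots> = real (card I)^2 * (\<Sum>i\<in>I. (a i)^2)^2"
    by (simp add: power_mult_distrib)
  also have "\<dots> \<le> real (card I)^2 * (real (card I) * (\<Sum>i\<in>I. (a i)^4))"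
    using sum_squared_le_sum_of_squares[of "\<lambda>i. (a i)^2" I]
    by (intro mult_left_mono) (simp_all add: ac_simps flip: power_mult)
  finally show ?thesis
    by (simp add: power3_eq_cube power2_eq_square ac_simps)
qed

lemma nn_integral_suminf_le:
  fixes g :: "nat \<Rightarrow> 'a \<Rightarrow> real"
  assumes int: "\<And>k. integrable M (g k)" and nonneg: "\<And>k \<omega>. 0 \<le> g k \<omega>"
    and bound: "\<And>k. (\<integral>\<omega>. g k \<omega> \<partial>M) \<le> c k" and "summable c"
  shows "(\<integral>\<^sup>+\<omega>. (\<Sum>k. ennreal (g k \<omega>)) \<partial>M) \<le> ennreal (\<Sum>k. c k)"
proof -
  have [measurable]: "g k \<in> borel_measurable M" for k
    using int by (rule borel_measurable_integrable)
  have c_nonneg: "0 \<le> c k" for k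
  proof -
    have "0 \<le> (\<integral>\<omega>. g k \<omega> \<partial>M)"
      by (intro integral_nonneg_AE AE_I2 nonneg)
    then show ?thesis
      using bound[of k] by linarith
  qed
  have "(\<integral>\<^sup>+\<omega>. (\<Sum>k. ennreal (g k \<omega>)) \<partial>M) = (\<Sum>k. \<integral>\<^sup>+\<omega>. ennreal (g k \<omega>) \<partial>M)"
    by (rule nn_integral_suminf) measurable
  also have "\<dots> = (\<Sum>k. ennreal (\<integral>\<omega>. g k \<omega> \<partial>M))"
    using int nonneg by (simp add: nn_integral_eq_integral)
  also have "\<dots> \<le> (\<Sum>k. ennreal (c k))"
    using bound by (intro suminf_le ennreal_leI) auto
  also have "\<dots> = ennreal (\<Sum>k. c k)"
    using \<open>summable c\<close> c_nonneg by (intro suminf_ennreal2) auto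
  finally show ?thesis .
qed

lemma integrable_square_suminf_geometric:
  fixes f :: "nat \<Rightarrow> 'a \<Rightarrow> real"
  assumes "0 < \<gamma>" "\<gamma> < 1"
    and [measurable]: "\<And>k. f k \<in> borel_measurable M"
    and nonneg: "\<And>k \<omega>. 0 \<le> f k \<omega>"
    and int: "\<And>k. integrable M (\<lambda>\<omega>. (f k \<omega>)^2)"
    and moment: "\<And>k. (\<integral>\<omega>. (f k \<omega>)^2 \<partial>M) \<le> b k"
    and summable_b: "summable (\<lambda>k. \<gamma>^k * b k)"
  shows "AE \<omega> in M. summable (\<lambda>k. \<gamma>^k * f k \<omega>)"
    and "integrable M (\<lambda>\<omega>. (\<Sum>k. \<gamma>^k * f k \<omega>)^2)"
proof -
  define q where "q \<omega> = (\<Sum>k. ennreal (\<gamma>^k * (f k \<omega>)^2))" for \<omega>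
  have "(\<integral>\<^sup>+\<omega>. q \<omega> \<partial>M) \<le> ennreal (\<Sum>k. \<gamma>^k * b k)"
    unfolding q_def using assms(1) int moment summable_b
    by (intro nn_integral_suminf_le) (auto intro: mult_left_mono)
  then have q_finite: "(\<integral>\<^sup>+\<omega>. q \<omega> \<partial>M) \<noteq> \<infinity>"
    by (auto simp: top_unique)
  then have "AE \<omega> in M. q \<omega> \<noteq> \<infinity>"
    unfolding q_def by (intro nn_integral_PInf_AE) auto
  then have AE_sq: "AE \<omega> in M. summable (\<lambda>k. \<gamma>^k * (f k \<omega>)^2)"
    unfolding q_def by eventually_elim (rule summable_suminf_not_top, use assms(1) in auto)
  then show "AE \<omega> in M. summable (\<lambda>k. \<gamma>^k * f k \<omega>)"
    by eventually_elim (rule Cauchy_Schwarz_ineq_suminf_geometric(1)[OF assms(1,2) nonneg])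
  have "AE \<omega> in M. ennreal ((\<Sum>k. \<gamma>^k * f k \<omega>)^2) \<le> ennreal (1 / (1 - \<gamma>)) * q \<omega>"
    using AE_sq
  proof eventually_elim
    case (elim \<omega>)
    have "0 \<le> (\<Sum>k. \<gamma>^k * (f k \<omega>)^2)"
      using elim assms(1) by (intro suminf_nonneg) auto
    then have "ennreal (1 / (1 - \<gamma>)) * q \<omega> = ennreal ((\<Sum>k. \<gamma>^k * (f k \<omega>)^2) / (1 - \<gamma>))"
      unfolding q_def using elim assms by (simp add: suminf_ennreal2 ennreal_mult[symmetric])
    moreover have "(\<Sum>k. \<gamma>^k * f k \<omega>)^2 \<le> (\<Sum>k. \<gamma>^k * (f k \<omega>)^2) / (1 - \<gamma>)"
      using assms(1,2) nonneg elim by (rule Cauchy_Schwarz_ineq_suminf_geometric(2))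
    ultimately show ?case
      by (simp add: ennreal_leI)
  qed
  then have "(\<integral>\<^sup>+\<omega>. ennreal (norm ((\<Sum>k. \<gamma>^k * f k \<omega>)^2)) \<partial>M)
      \<le> (\<integral>\<^sup>+\<omega>. ennreal (1 / (1 - \<gamma>)) * q \<omega> \<partial>M)"
    by (intro nn_integral_mono_AE) auto
  also have "\<dots> = ennreal (1 / (1 - \<gamma>)) * (\<integral>\<^sup>+\<omega>. q \<omega> \<partial>M)"
    unfolding q_def by (rule nn_integral_cmult) measurable
  also have "\<dots> < \<infinity>"
    using q_finite by (simp add: ennreal_mult_less_top less_top)
  finally show "integrable M (\<lambda>\<omega>. (\<Sum>k. \<gamma>^k * f k \<omega>)^2)"
    by (intro integrableI_bounded) measurable
qed

lemma integrable_power4_sum: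
  fixes f :: "'i \<Rightarrow> 'a \<Rightarrow> real"
  assumes meas: "\<And>i. i \<in> I \<Longrightarrow> f i \<in> borel_measurable M"
    and int: "\<And>i. i \<in> I \<Longrightarrow> integrable M (\<lambda>\<omega>. (f i \<omega>)^4)"
    and moment: "\<And>i. i \<in> I \<Longrightarrow> (\<integral>\<omega>. (f i \<omega>)^4 \<partial>M) \<le> c"
  shows "integrable M (\<lambda>\<omega>. (\<Sum>i\<in>I. f i \<omega>)^4)"
    and "(\<integral>\<omega>. (\<Sum>i\<in>I. f i \<omega>)^4 \<partial>M) \<le> real (card I)^4 * c"
proof -
  let ?bound = "\<lambda>\<omega>. real (card I)^3 * (\<Sum>i\<in>I. (f i \<omega>)^4)"
  have bound_int: "integrable M ?bound"
    using int by (intro integrable_mult_right Bochner_Integration.integrable_sum)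
  have bounded: "(\<Sum>i\<in>I. f i \<omega>)^4 \<le> ?bound \<omega>" for \<omega>
    by (rule power4_sum_le)
  have "(\<lambda>\<omega>. (\<Sum>i\<in>I. f i \<omega>)^4) \<in> borel_measurable M"
    using meas by measurable
  then show int_sum: "integrable M (\<lambda>\<omega>. (\<Sum>i\<in>I. f i \<omega>)^4)"
  proof (rule Bochner_Integration.integrable_bound[OF bound_int])
    show "AE \<omega> in M. norm ((\<Sum>i\<in>I. f i \<omega>)^4) \<le> norm (?bound \<omega>)"
      using bounded by (intro AE_I2) (simp add: order_trans[OF _ abs_ge_self])
  qed
  have "(\<integral>\<omega>. (\<Sum>i\<in>I. f i \<omega>)^4 \<partial>M) \<le> (\<integral>\<omega>. ?bound \<omega> \<partial>M)"
    using int_sum bound_int bounded by (rule integral_mono)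
  also have "\<dots> = real (card I)^3 * (\<Sum>i\<in>I. \<integral>\<omega>. (f i \<omega>)^4 \<partial>M)"
    using int by (simp add: Bochner_Integration.integral_sum)
  also have "\<dots> \<le> real (card I)^3 * (real (card I) * c)"
    using moment sum_mono[of I _ "\<lambda>_. c"] by (intro mult_left_mono) auto
  also have "\<dots> = real (card I)^4 * c"
    by (simp add: power_numeral_reduce)
  finally show "(\<integral>\<omega>. (\<Sum>i\<in>I. f i \<omega>)^4 \<partial>M) \<le> real (card I)^4 * c" .
qed

lemma (in prob_space) power4_partial_sum_moment:
  fixes u :: "nat \<Rightarrow> 'a \<Rightarrow> real"
  assumes [measurable]: "\<And>t. u t \<in> borel_measurable M"
    and int: "\<And>t. integrable M (\<lambda>\<omega>. (u t \<omega>)^4)"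
    and moment: "\<And>t. expectation (\<lambda>\<omega>. (u t \<omega>)^4) \<le> \<sigma>"
  shows "integrable M (\<lambda>\<omega>. (x + (\<Sum>t\<le>k. u t \<omega>))^4)"
    and "expectation (\<lambda>\<omega>. (x + (\<Sum>t\<le>k. u t \<omega>))^4) \<le> (real k + 2)^4 * (x^4 + \<sigma>)"
proof -
  \<comment> \<open>prepending the constant \<open>x\<close> turns \<open>x + (\<Sum>t\<le>k. u t)\<close> into a plain sum of \<open>k + 2\<close> terms\<close>
  define z where "z t \<omega> = (case t of 0 \<Rightarrow> x | Suc t \<Rightarrow> u t \<omega>)" for t \<omega>
  have sum_eq: "x + (\<Sum>t\<le>k. u t \<omega>) = (\<Sum>t<Suc (Suc k). z t \<omega>)" for \<omega>
    unfolding z_def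
    by (subst sum.lessThan_Suc_shift) (simp add: lessThan_Suc_atMost del: sum.lessThan_Suc)
  have "0 \<le> expectation (\<lambda>\<omega>. (u 0 \<omega>)^4)"
    by simp
  then have "0 \<le> \<sigma>"
    using moment[of 0] by linarith
  have z_meas: "z t \<in> borel_measurable M" for t
    unfolding z_def[abs_def] by (cases t) simp_all
  have z_int: "integrable M (\<lambda>\<omega>. (z t \<omega>)^4)" for t
    by (cases t) (simp_all add: z_def int)
  have z_moment: "expectation (\<lambda>\<omega>. (z t \<omega>)^4) \<le> x^4 + \<sigma>" for t
  proof (cases t)
    case 0
    then show ?thesis
      using \<open>0 \<le> \<sigma>\<close> by (simp add: z_def prob_space)
  next
    case (Suc t')
    then have "expectation (\<lambda>\<omega>. (z t \<omega>)^4) = expectation (\<lambda>\<omega>. (u t' \<omega>)^4)"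
      by (simp add: z_def)
    also have "\<dots> \<le> \<sigma>"
      by (rule moment)
    also have "\<dots> \<le> x^4 + \<sigma>"
      by (simp add: zero_le_even_power)
    finally show ?thesis .
  qed
  show "integrable M (\<lambda>\<omega>. (x + (\<Sum>t\<le>k. u t \<omega>))^4)"
    unfolding sum_eq
    by (rule integrable_power4_sum(1)[where c = "x^4 + \<sigma>"]) (simp_all add: z_meas z_int z_moment)
  have "expectation (\<lambda>\<omega>. (\<Sum>t<Suc (Suc k). z t \<omega>)^4) \<le> real (card {..<Suc (Suc k)})^4 * (x^4 + \<sigma>)"
    by (rule integrable_power4_sum(2)) (simp_all add: z_meas z_int z_moment)
  then show "expectation (\<lambda>\<omega>. (x + (\<Sum>t\<le>k. u t \<omega>))^4) \<le> (real k + 2)^4 * (x^4 + \<sigma>)"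
    unfolding sum_eq by (simp add: add.commute)
qed

lemma (in finite_measure) square_integrable_dominated:
  fixes g h :: "'a \<Rightarrow> real"
  assumes [measurable]: "g \<in> borel_measurable M"
    and "integrable M (\<lambda>\<omega>. (h \<omega>)^2)"
    and "AE \<omega> in M. \<bar>g \<omega>\<bar> \<le> c + h \<omega>"
  shows "integrable M (\<lambda>\<omega>. (g \<omega>)^2)"
proof (rule Bochner_Integration.integrable_bound)
  show "integrable M (\<lambda>\<omega>. 2 * c^2 + 2 * (h \<omega>)^2)"
    using assms(2) by simp
  show "AE \<omega> in M. norm ((g \<omega>)^2) \<le> norm (2 * c^2 + 2 * (h \<omega>)^2)"
    using assms(3)
  proof eventually_elim
    case (elim \<omega>)
    then have "(g \<omega>)^2 \<le> (c + h \<omega>)^2"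
      by (simp add: abs_le_square_iff[symmetric])
    also have "\<dots> \<le> 2 * c^2 + 2 * (h \<omega>)^2"
    proof -
      have "0 \<le> (c - h \<omega>)^2"
        by simp
      then show ?thesis
        by (simp add: power2_sum power2_diff)
    qed
    finally show ?case
      by simp
  qed
qed measurable

lemma spec_norm_nonneg: "0 \<le> spec_norm M"
  unfolding spec_norm_def by (intro onorm_pos_le matrix_vector_mul_bounded_linear)

lemma norm_matrix_vector_mult_le: "norm (M *v x) \<le> spec_norm M * norm x"
  unfolding spec_norm_def by (intro onorm matrix_vector_mul_bounded_linear)

lemma norm_matpow_mult_le:
  assumes "spec_norm A \<le> 1"
  shows "norm (matpow A k *v x) \<le> norm x"
proof (induction k)
  case (Suc k)
  have "norm (matpow A (Suc k) *v x) = norm (A *v (matpow A k *v x))"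
    by (simp add: matrix_vector_mul_assoc)
  also have "\<dots> \<le> spec_norm A * norm (matpow A k *v x)"
    by (rule norm_matrix_vector_mult_le)
  also have "\<dots> \<le> norm x"
    using Suc.IH assms spec_norm_nonneg[of A] by (meson mult_left_le_one_le norm_ge_zero order_trans)
  finally show ?case .
qed simp

lemma abs_inner_matrix_vector_mult_le:
  "\<bar>w \<bullet> (P *v y)\<bar> \<le> spec_norm P * (norm w * norm y)"
proof -
  have "\<bar>w \<bullet> (P *v y)\<bar> \<le> norm w * norm (P *v y)"
    by (rule Cauchy_Schwarz_ineq2)
  also have "\<dots> \<le> norm w * (spec_norm P * norm y)"
    by (intro mult_left_mono norm_matrix_vector_mult_le) simp
  finally show ?thesis by (simp add: ac_simps)
qed

lemma abs_discounted_inner_le: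
  fixes \<gamma> :: real
  assumes "0 \<le> \<gamma>" "\<gamma> \<le> 1" "norm w \<le> s" "norm y \<le> s"
  shows "\<bar>\<gamma>^(k+1) * (w \<bullet> (P *v y))\<bar> \<le> spec_norm P * (\<gamma>^k * s^2)"
proof -
  have "norm w * norm y \<le> s^2"
    using assms(3,4) by (simp add: power2_eq_square mult_mono')
  then have "\<bar>w \<bullet> (P *v y)\<bar> \<le> spec_norm P * s^2"
    using abs_inner_matrix_vector_mult_le[of w P y] spec_norm_nonneg[of P]
    by (meson mult_left_mono order_trans)
  moreover have "\<gamma>^(k+1) \<le> \<gamma>^k"
    using assms(1,2) by (intro power_decreasing) auto
  ultimately have "\<gamma>^(k+1) * \<bar>w \<bullet> (P *v y)\<bar> \<le> \<gamma>^k * (spec_norm P * s^2)"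
    using assms(1) by (intro mult_mono) auto
  then show ?thesis
    using assms(1) by (simp add: abs_mult ac_simps)
qed

lemma measurable_matrix_vector_mult[measurable]:
  fixes A :: "real^'n^'m"
  assumes [measurable]: "f \<in> borel_measurable M"
  shows "(\<lambda>x. A *v f x) \<in> borel_measurable M"
  by (rule measurable_compose[OF assms])
    (intro borel_measurable_continuous_onI linear_continuous_on matrix_vector_mul_bounded_linear)

lemma linear_vbar: "linear (\<lambda>p. vbar L (fst p) (snd p))"
  by (rule linearI) (auto simp: vbar_def vec_eq_iff matrix_vector_right_distrib
      matrix_vector_mult_scaleR algebra_simps split: sum.splits)

lemma measurable_vbar:
  assumes "(\<lambda>\<omega>. (v \<omega>, s \<omega>)) \<in> borel_measurable M"
  shows "(\<lambda>\<omega>. vbar L (v \<omega>) (s \<omega>)) \<in> borel_measurable M"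
  using measurable_compose[OF assms borel_measurable_continuous_onI[OF linear_continuous_on[OF
        linear_vbar[of L, unfolded linear_conv_bounded_linear]]]]
  by simp

definition envelope :: "'a::real_normed_vector \<Rightarrow> (nat \<Rightarrow> 'a) \<Rightarrow> nat \<Rightarrow> real" where
  "envelope x w k = norm x + (\<Sum>t\<le>k. norm (w t))"

lemma G_KL_summands_le:
  fixes Abar Pbar :: "real^('n::finite+'n)^('n+'n)" and xbar :: "real^('n+'n)"
    and w :: "nat \<Rightarrow> real^('n+'n)"
  assumes contractive: "spec_norm Abar \<le> 1" and \<gamma>: "0 \<le> \<gamma>" "\<gamma> \<le> 1"
  shows "\<bar>\<gamma>^(k+1) * (w k \<bullet> (Pbar *v (matpow Abar (k+1) *v xbar)))\<bar>
           \<le> spec_norm Pbar * (\<gamma>^k * (envelope xbar w k)^2)"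
    and "\<bar>\<gamma>^(k+1) * (w k \<bullet> (Pbar *v w k))\<bar> \<le> spec_norm Pbar * (\<gamma>^k * (envelope xbar w k)^2)"
    and "\<bar>\<gamma>^(k+1) * (w k \<bullet> (Pbar *v (\<Sum>\<tau><k. matpow Abar (k - \<tau>) *v w \<tau>)))\<bar>
           \<le> spec_norm Pbar * (\<gamma>^k * (envelope xbar w k)^2)"
proof -
  have "(\<Sum>t<k. norm (w t)) \<le> (\<Sum>t\<le>k. norm (w t))" "norm (w k) \<le> (\<Sum>t\<le>k. norm (w t))"
    by (auto intro: sum_mono2 member_le_sum)
  then have partial_le: "(\<Sum>t<k. norm (w t)) \<le> envelope xbar w k"
    and w_le: "norm (w k) \<le> envelope xbar w k"
    unfolding envelope_def by (auto intro: add_increasing)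
  have contraction: "norm (matpow Abar j *v y) \<le> norm y" for j y
    using contractive by (rule norm_matpow_mult_le)
  have "norm (matpow Abar (k+1) *v xbar) \<le> envelope xbar w k"
    using contraction[of "k+1" xbar] unfolding envelope_def by (simp add: add_increasing2 sum_nonneg)
  with w_le \<gamma> show "\<bar>\<gamma>^(k+1) * (w k \<bullet> (Pbar *v (matpow Abar (k+1) *v xbar)))\<bar>
      \<le> spec_norm Pbar * (\<gamma>^k * (envelope xbar w k)^2)"
    by (intro abs_discounted_inner_le)
  from w_le \<gamma> show "\<bar>\<gamma>^(k+1) * (w k \<bullet> (Pbar *v w k))\<bar> \<le> spec_norm Pbar * (\<gamma>^k * (envelope xbar w k)^2)"
    by (intro abs_discounted_inner_le)
  have "norm (\<Sum>\<tau><k. matpow Abar (k - \<tau>) *v w \<tau>) \<le> (\<Sum>\<tau><k. norm (matpow Abar (k - \<tau>) *v w \<tau>))"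
    by (rule norm_sum)
  also have "\<dots> \<le> (\<Sum>\<tau><k. norm (w \<tau>))"
    by (intro sum_mono contraction)
  finally have "norm (\<Sum>\<tau><k. matpow Abar (k - \<tau>) *v w \<tau>) \<le> envelope xbar w k"
    using partial_le by linarith
  with w_le \<gamma> show "\<bar>\<gamma>^(k+1) * (w k \<bullet> (Pbar *v (\<Sum>\<tau><k. matpow Abar (k - \<tau>) *v w \<tau>)))\<bar>
      \<le> spec_norm Pbar * (\<gamma>^k * (envelope xbar w k)^2)"
    by (intro abs_discounted_inner_le)
qed

lemma G_KL_summable_abs_le:
  fixes Abar Pbar :: "real^('n::finite+'n)^('n+'n)" and xbar :: "real^('n+'n)"
    and w :: "nat \<Rightarrow> real^('n+'n)"
  assumes contractive: "spec_norm Abar \<le> 1" and \<gamma>: "0 \<le> \<gamma>" "\<gamma> \<le> 1"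
    and summable: "summable (\<lambda>k. \<gamma>^k * (envelope xbar w k)^2)"
  shows "summable (\<lambda>k. \<gamma>^(k+1) * (w k \<bullet> (Pbar *v (matpow Abar (k+1) *v xbar))))"
    and "summable (\<lambda>k. \<gamma>^(k+1) * (w k \<bullet> (Pbar *v w k)))"
    and "summable (\<lambda>k. \<gamma>^(k+1) * (w k \<bullet> (Pbar *v (\<Sum>\<tau><k. matpow Abar (k - \<tau>) *v w \<tau>))))"
    and "\<bar>G_KL \<gamma> Abar Pbar xbar w\<bar>
           \<le> \<bar>xbar \<bullet> (Pbar *v xbar)\<bar> + 5 * spec_norm Pbar * (\<Sum>k. \<gamma>^k * (envelope xbar w k)^2)"
proof -
  note bounds = G_KL_summands_le[OF contractive \<gamma>, where Pbar = Pbar and xbar = xbar and w = w]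
  note T1 = summable_abs_suminf_le[OF summable bounds(1)]
    and T2 = summable_abs_suminf_le[OF summable bounds(2)]
    and T3 = summable_abs_suminf_le[OF summable bounds(3)]
  show "summable (\<lambda>k. \<gamma>^(k+1) * (w k \<bullet> (Pbar *v (matpow Abar (k+1) *v xbar))))"
    and "summable (\<lambda>k. \<gamma>^(k+1) * (w k \<bullet> (Pbar *v w k)))"
    and "summable (\<lambda>k. \<gamma>^(k+1) * (w k \<bullet> (Pbar *v (\<Sum>\<tau><k. matpow Abar (k - \<tau>) *v w \<tau>))))"
    by (fact T1(1) T2(1) T3(1))+
  show "\<bar>G_KL \<gamma> Abar Pbar xbar w\<bar>
      \<le> \<bar>xbar \<bullet> (Pbar *v xbar)\<bar> + 5 * spec_norm Pbar * (\<Sum>k. \<gamma>^k * (envelope xbar w k)^2)"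
    using T1(2) T2(2) T3(2) unfolding G_KL_def by linarith
qed

lemma (in prob_space) envelope_series_square_integrable:
  fixes w :: "nat \<Rightarrow> 'a \<Rightarrow> 'b::real_normed_vector"
  assumes "0 < \<gamma>" "\<gamma> < 1"
    and [measurable]: "\<And>k. w k \<in> borel_measurable M"
    and fourth_int: "\<And>k. integrable M (\<lambda>\<omega>. norm (w k \<omega>) ^ 4)"
    and fourth: "\<And>k. expectation (\<lambda>\<omega>. norm (w k \<omega>) ^ 4) \<le> \<sigma>4"
  shows "AE \<omega> in M. summable (\<lambda>k. \<gamma>^k * (envelope x (\<lambda>t. w t \<omega>) k)^2)"
    and "integrable M (\<lambda>\<omega>. (\<Sum>k. \<gamma>^k * (envelope x (\<lambda>t. w t \<omega>) k)^2)^2)"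
proof -
  define s where "s k \<omega> = envelope x (\<lambda>t. w t \<omega>) k" for k \<omega>
  have "integrable M (\<lambda>\<omega>. ((s k \<omega>)^2)^2)"
    and "expectation (\<lambda>\<omega>. ((s k \<omega>)^2)^2) \<le> (real k + 2)^4 * (norm x ^ 4 + \<sigma>4)" for k
  proof -
    have "(\<lambda>\<omega>. norm (w t \<omega>)) \<in> borel_measurable M" for t
      by measurable
    from power4_partial_sum_moment[OF this fourth_int fourth, where x = "norm x" and k = k]
    show "integrable M (\<lambda>\<omega>. ((s k \<omega>)^2)^2)"
      and "expectation (\<lambda>\<omega>. ((s k \<omega>)^2)^2) \<le> (real k + 2)^4 * (norm x ^ 4 + \<sigma>4)"
      unfolding s_def envelope_def by (simp_all flip: power_mult)
  qed
  moreover have "summable (\<lambda>k. \<gamma>^k * ((real k + 2)^4 * (norm x ^ 4 + \<sigma>4)))"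
    using summable_mult2[OF summable_geometric_times_power[OF assms(1,2)]] by (simp add: mult.assoc)
  moreover have "(\<lambda>\<omega>. (s k \<omega>)^2) \<in> borel_measurable M" for k
    unfolding s_def envelope_def by measurable
  ultimately show "AE \<omega> in M. summable (\<lambda>k. \<gamma>^k * (envelope x (\<lambda>t. w t \<omega>) k)^2)"
    and "integrable M (\<lambda>\<omega>. (\<Sum>k. \<gamma>^k * (envelope x (\<lambda>t. w t \<omega>) k)^2)^2)"
    unfolding s_def[symmetric]
    by (auto intro!: integrable_square_suminf_geometric[OF assms(1,2),
        where b = "\<lambda>k. (real k + 2)^4 * (norm x ^ 4 + \<sigma>4)"])
qed

lemma (in prob_space) G_KL_square_integrable:
  fixes Abar Pbar :: "real^('n::finite+'n)^('n+'n)" and xbar :: "real^('n+'n)"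
    and w :: "nat \<Rightarrow> 'a \<Rightarrow> real^('n+'n)"
  assumes "0 < \<gamma>" "\<gamma> < 1" "spec_norm Abar \<le> 1"
    and [measurable]: "\<And>k. w k \<in> borel_measurable M"
    and fourth_int: "\<And>k. integrable M (\<lambda>\<omega>. norm (w k \<omega>) ^ 4)"
    and fourth: "\<And>k. expectation (\<lambda>\<omega>. norm (w k \<omega>) ^ 4) \<le> \<sigma>4"
  shows "(AE \<omega> in M.
            summable (\<lambda>k. \<gamma>^(k+1) * (w k \<omega> \<bullet> (Pbar *v (matpow Abar (k+1) *v xbar))))
          \<and> summable (\<lambda>k. \<gamma>^(k+1) * (w k \<omega> \<bullet> (Pbar *v w k \<omega>)))
          \<and> summable (\<lambda>k. \<gamma>^(k+1) * (w k \<omega> \<bullet> (Pbar *v (\<Sum>\<tau><k. matpow Abar (k - \<tau>) *v w \<tau> \<omega>)))))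
       \<and> integrable M (\<lambda>\<omega>. G_KL \<gamma> Abar Pbar xbar (\<lambda>k. w k \<omega>))
       \<and> integrable M (\<lambda>\<omega>. (G_KL \<gamma> Abar Pbar xbar (\<lambda>k. w k \<omega>))^2)"
proof -
  define H where "H \<omega> = (\<Sum>k. \<gamma>^k * (envelope xbar (\<lambda>t. w t \<omega>) k)^2)" for \<omega>
  define G where "G \<omega> = G_KL \<gamma> Abar Pbar xbar (\<lambda>k. w k \<omega>)" for \<omega>
  have AE_summable: "AE \<omega> in M. summable (\<lambda>k. \<gamma>^k * (envelope xbar (\<lambda>t. w t \<omega>) k)^2)"
    using assms(1,2,4) fourth_int fourth by (rule envelope_series_square_integrable(1))
  have H_sq_int: "integrable M (\<lambda>\<omega>. (H \<omega>)^2)"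
    unfolding H_def using assms(1,2,4) fourth_int fourth by (rule envelope_series_square_integrable(2))
  have AE_bound: "AE \<omega> in M.
            summable (\<lambda>k. \<gamma>^(k+1) * (w k \<omega> \<bullet> (Pbar *v (matpow Abar (k+1) *v xbar))))
          \<and> summable (\<lambda>k. \<gamma>^(k+1) * (w k \<omega> \<bullet> (Pbar *v w k \<omega>)))
          \<and> summable (\<lambda>k. \<gamma>^(k+1) * (w k \<omega> \<bullet> (Pbar *v (\<Sum>\<tau><k. matpow Abar (k - \<tau>) *v w \<tau> \<omega>))))
          \<and> \<bar>G \<omega>\<bar> \<le> \<bar>xbar \<bullet> (Pbar *v xbar)\<bar> + 5 * spec_norm Pbar * H \<omega>"
    using AE_summable
  proof eventually_elim
    case (elim \<omega>)
    have "0 \<le> \<gamma>" "\<gamma> \<le> 1"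
      using assms(1,2) by simp_all
    from G_KL_summable_abs_le[where w = "\<lambda>k. w k \<omega>", OF assms(3) this elim]
    show ?case
      unfolding G_def H_def by blast
  qed
  have G_meas[measurable]: "G \<in> borel_measurable M"
    unfolding G_def G_KL_def by measurable
  have "integrable M (\<lambda>\<omega>. (G \<omega>)^2)"
  proof (rule square_integrable_dominated[OF G_meas])
    show "integrable M (\<lambda>\<omega>. (5 * spec_norm Pbar * H \<omega>)^2)"
      using H_sq_int by (simp add: power_mult_distrib)
    show "AE \<omega> in M. \<bar>G \<omega>\<bar> \<le> \<bar>xbar \<bullet> (Pbar *v xbar)\<bar> + 5 * spec_norm Pbar * H \<omega>"
      using AE_bound by eventually_elim blast
  qed
  moreover have "integrable M G"
    using calculation by (rule square_integrable_imp_integrable[OF G_meas])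
  ultimately show ?thesis
    using AE_bound unfolding G_def[abs_def] by (simp add: AE_conj_iff)
qed

theorem corollary2:
  fixes M :: "'a measure"
    and A :: "real^'n^'n" and B :: "real^'m^'n" and C :: "real^'n^'p"
    and K :: "real^'n^'m" and L :: "real^'p^'n"
    and Q :: "real^'n^'n" and R :: "real^'m^'m" and \<gamma> :: real
    and Pbar :: "real^('n+'n)^('n+'n)" and xbar :: "real^('n+'n)"
    and v :: "nat \<Rightarrow> 'a \<Rightarrow> real^'n" and s :: "nat \<Rightarrow> 'a \<Rightarrow> real^'p"
    and \<sigma>4 :: real and \<rho> :: real
  defines "w \<equiv> (\<lambda>k \<omega>. vbar L (v k \<omega>) (s k \<omega>))"
  assumes "prob_space M"
    and iid_indep: "prob_space.indep_vars M (\<lambda>_. borel) (\<lambda>k \<omega>. (v k \<omega>, s k \<omega>)) UNIV"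
    and iid_dist: "\<forall>k. distr M borel (\<lambda>\<omega>. (v k \<omega>, s k \<omega>)) = distr M borel (\<lambda>\<omega>. (v 0 \<omega>, s 0 \<omega>))"
    and mean0: "\<forall>k. prob_space.expectation M (w k) = 0"
    and fourth_int: "\<forall>k. integrable M (\<lambda>\<omega>. norm (w k \<omega>) ^ 4)"
    and fourth: "\<forall>k. prob_space.expectation M (\<lambda>\<omega>. norm (w k \<omega>) ^ 4) \<le> \<sigma>4"
    and "pos_def_mat Q" and "pos_def_mat R"
    and "0 < \<gamma>" and "\<gamma> < 1"
    and rho: "spec_norm (A_KL A B C K L) = \<rho>" and "\<rho> < 1"
    and lyap: "Pbar = Q_K Q R K + \<gamma> *\<^sub>R (transpose (A_KL A B C K L) ** Pbar ** A_KL A B C K L)"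
  shows "(AE \<omega> in M.
            summable (\<lambda>k. \<gamma>^(k+1) * (w k \<omega> \<bullet> (Pbar *v (matpow (A_KL A B C K L) (k+1) *v xbar))))
          \<and> summable (\<lambda>k. \<gamma>^(k+1) * (w k \<omega> \<bullet> (Pbar *v w k \<omega>)))
          \<and> summable (\<lambda>k. \<gamma>^(k+1) * (w k \<omega> \<bullet> (Pbar *v (\<Sum>\<tau><k. matpow (A_KL A B C K L) (k - \<tau>) *v w \<tau> \<omega>)))))
       \<and> integrable M (\<lambda>\<omega>. G_KL \<gamma> (A_KL A B C K L) Pbar xbar (\<lambda>k. w k \<omega>))
       \<and> integrable M (\<lambda>\<omega>. (G_KL \<gamma> (A_KL A B C K L) Pbar xbar (\<lambda>k. w k \<omega>))^2)"
proof -
  interpret prob_space M by fact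
  have "(\<lambda>\<omega>. (v k \<omega>, s k \<omega>)) \<in> borel_measurable M" for k
    using iid_indep by (simp add: indep_vars_def)
  then have w_meas: "w k \<in> borel_measurable M" for k
    unfolding w_def by (rule measurable_vbar)
  have A_KL_norm: "spec_norm (A_KL A B C K L) \<le> 1"
    using rho \<open>\<rho> < 1\<close> by simp
  show ?thesis
    using G_KL_square_integrable[OF \<open>0 < \<gamma>\<close> \<open>\<gamma> < 1\<close> A_KL_norm w_meas
        fourth_int[rule_format] fourth[rule_format]] .
qed

end
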